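(* Let $A$ be a unital algebra over a field $F$ with $\operatorname{char}(F)\neq2$ and $\mathcal{A}=M_n(A)$, $n\ge2$. Then $\operatorname{QJDer}(\mathcal{A})=\operatorname{Cent}(\mathcal{A})+\operatorname{Der}(\mathcal{A})$.
   Context: $x\circ y=xy+yx$. $\operatorname{QJDer}(\mathcal{A})$: linear $f:\mathcal{A}\to\mathcal{A}$ for which there is a linear $h$ with $f(x)\circ y+x\circ f(y)=h(x\circ y)$ for all $x,y$. $\operatorname{Cent}(\mathcal{A})$: linear $f$ with $f(xy)=f(x)y=xf(y)$. $\operatorname{Der}(\mathcal{A})$: linear $d$ with $d(xy)=d(x)y+xd(y)$. Sums of sets of maps are sets of pointwise sums. *)

theory Defs
  imports "HOL-Analysis.Analysis"
begin

definition unital_algebra :: "('k::field \<Rightarrow> 'a::ring_1 \<Rightarrow> 'a) \<Rightarrow> bool" where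
  "unital_algebra smul \<longleftrightarrow> module smul \<and>
     (\<forall>c x y. smul c (x * y) = smul c x * y \<and> smul c (x * y) = x * smul c y)"

definition mscale :: "('k \<Rightarrow> 'a \<Rightarrow> 'a) \<Rightarrow> 'k \<Rightarrow> 'a ^'n^'n \<Rightarrow> 'a ^'n^'n" where
  "mscale smul c X = (\<chi> i j. smul c (X $ i $ j))"

definition flinear :: "('k::field \<Rightarrow> 'a::ring_1 \<Rightarrow> 'a) \<Rightarrow> ('a^'n^'n \<Rightarrow> 'a^'n^'n) \<Rightarrow> bool" where
  "flinear smul f \<longleftrightarrow> module_hom (mscale smul) (mscale smul) f"

definition jprod :: "'a::ring_1^'n^'n \<Rightarrow> 'a^'n^'n \<Rightarrow> 'a^'n^'n" where
  "jprod X Y = X ** Y + Y ** X"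

definition QJDer :: "('k::field \<Rightarrow> 'a::ring_1 \<Rightarrow> 'a) \<Rightarrow> ('a^'n^'n \<Rightarrow> 'a^'n^'n) set" where
  "QJDer smul = {f. flinear smul f \<and>
     (\<exists>h. flinear smul h \<and> (\<forall>X Y. jprod (f X) Y + jprod X (f Y) = h (jprod X Y)))}"

definition Cent :: "('k::field \<Rightarrow> 'a::ring_1 \<Rightarrow> 'a) \<Rightarrow> ('a^'n^'n \<Rightarrow> 'a^'n^'n) set" where
  "Cent smul = {f. flinear smul f \<and> (\<forall>X Y. f (X ** Y) = f X ** Y \<and> f (X ** Y) = X ** f Y)}"

definition Der :: "('k::field \<Rightarrow> 'a::ring_1 \<Rightarrow> 'a) \<Rightarrow> ('a^'n^'n \<Rightarrow> 'a^'n^'n) set" where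
  "Der smul = {d. flinear smul d \<and> (\<forall>X Y. d (X ** Y) = d X ** Y + X ** d Y)}"

definition map_set_sum :: "('b \<Rightarrow> 'c::plus) set \<Rightarrow> ('b \<Rightarrow> 'c) set \<Rightarrow> ('b \<Rightarrow> 'c) set" where
  "map_set_sum S T = {(\<lambda>x. f x + g x) | f g. f \<in> S \<and> g \<in> T}"

end

theory Submission
  imports Defs
begin

(* Let f be a quasi-Jordan derivation of R = M_n(A) with companion h, and z = f(1). Putting y = 1
   in the defining identity gives h(2x) = 2f(x) + x o z; comparing with x = y = e for an
   idempotent e shows that the Peirce components e z (1 - e) and (1 - e) z e vanish, so z commutes
   with all idempotents. Since n >= 2, the ring R is generated under subtraction and multiplication
   by the idempotents E_ii and E_ii + c E_ij (i ~= j), so z is central. Then D = f - z is a Jordan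
   derivation, and as char F ~= 2 the classical Peirce decomposition argument shows that D satisfies
   the Leibniz rule D(e y) = D(e) y + e D(y) for these idempotents. The set of elements with this
   property is again closed under subtraction and multiplication, so D is a derivation and
   f(x) = z x + D(x). Conversely, for c in the centroid and d a derivation, c + d is quasi-Jordan with
   companion 2c + d. *)

section \<open>Jordan derivations of 2-torsion-free rings\<close>

lemma double_cancel:
  fixes a b :: "'a::ab_group_add"
  assumes two_torsion_free: "\<And>x::'a. x + x = 0 \<Longrightarrow> x = 0" and "a + a = b + b"
  shows "a = b"
proof -
  have "(a - b) + (a - b) = 0"
    using assms(2) by (simp add: algebra_simps)
  then show ?thesis
    using two_torsion_free[of "a - b"] by simp
qed

lemma idempotent_assoc:
  fixes e :: "'a::semigroup_mult"
  assumes "e * e = e"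
  shows "e * (e * x) = e * x"
  using assms by (simp flip: mult.assoc)

locale jordan_derivation =
  fixes D :: "'r::ring_1 \<Rightarrow> 'r"
  assumes additive: "D (x + y) = D x + D y"
    and jordan: "D (x * y + y * x) = D x * y + x * D y + D y * x + y * D x"
    and two_torsion_free: "x + x = 0 \<Longrightarrow> x = 0"
begin

lemma zero [simp]: "D 0 = 0"
  using additive[of 0 0] by simp

lemma minus: "D (- x) = - D x"
  using additive[of x "- x"] by (simp add: eq_neg_iff_add_eq_0 add.commute)

lemma diff: "D (x - y) = D x - D y"
  using additive[of x "- y"] by (simp add: minus)

lemmas double_cancel = double_cancel[OF two_torsion_free]

lemma one [simp]: "D 1 = 0"
proof -
  have "D 1 + D 1 = (D 1 + D 1) + (D 1 + D 1)"
    using jordan[of 1 1] additive[of 1 1] by simp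
  then show ?thesis
    using two_torsion_free[of "D 1"] by simp
qed

lemma square: "D (x * x) = D x * x + x * D x"
proof (rule double_cancel)
  show "D (x * x) + D (x * x) = (D x * x + x * D x) + (D x * x + x * D x)"
    using jordan[of x x] by (simp add: additive algebra_simps)
qed

lemma sandwich: "D (x * y * x) = D x * y * x + x * D y * x + x * y * D x"
proof (rule double_cancel)
  have "x * y * x + x * y * x = (x * (x * y + y * x) + (x * y + y * x) * x) - ((x * x) * y + y * (x * x))"
    by (simp add: algebra_simps)
  then have "D (x * y * x) + D (x * y * x) =
      D (x * (x * y + y * x) + (x * y + y * x) * x) - D ((x * x) * y + y * (x * x))"
    by (metis additive diff)
  also have "\<dots> = (D x * y * x + x * D y * x + x * y * D x) + (D x * y * x + x * D y * x + x * y * D x)"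
    by (simp only: jordan square) (simp add: algebra_simps)
  finally show "D (x * y * x) + D (x * y * x) = \<dots>" .
qed

definition leibniz_defect :: "'r \<Rightarrow> 'r \<Rightarrow> 'r" where
  "leibniz_defect a y = D (a * y) - D a * y - a * D y"

definition leibniz_at :: "'r \<Rightarrow> bool" where
  "leibniz_at a \<longleftrightarrow> (\<forall>y. leibniz_defect a y = 0)"

lemma leibniz_atD: "leibniz_at a \<Longrightarrow> D (a * y) = D a * y + a * D y"
  unfolding leibniz_at_def leibniz_defect_def by (simp add: algebra_simps)

lemma leibniz_at_diff: "leibniz_at a \<Longrightarrow> leibniz_at b \<Longrightarrow> leibniz_at (a - b)"
  unfolding leibniz_at_def leibniz_defect_def by (simp add: diff algebra_simps)

lemma leibniz_at_mult: "leibniz_at a \<Longrightarrow> leibniz_at b \<Longrightarrow> leibniz_at (a * b)"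
  unfolding leibniz_at_def leibniz_defect_def by (simp add: algebra_simps)

lemma leibniz_defect_add: "leibniz_defect a (y + z) = leibniz_defect a y + leibniz_defect a z"
  unfolding leibniz_defect_def by (simp add: additive algebra_simps)

lemma leibniz_defect_complement: "leibniz_defect (1 - e) y = - leibniz_defect e y"
  unfolding leibniz_defect_def by (simp add: diff algebra_simps)

context
  fixes e :: 'r
  assumes idem: "e * e = e"
begin

lemma idempotent_eq: "D e = D e * e + e * D e"
  using square[of e] unfolding idem .

lemma idempotent_corner: "e * D e * e = 0"
proof -
  have "e * D e * e = e * (D e * e + e * D e) * e"
    using idempotent_eq by (rule arg_cong)
  also have "\<dots> = e * D e * e + e * D e * e"
    by (simp add: algebra_simps idem idempotent_assoc[OF idem])
  finally show ?thesis by simp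
qed

lemma leibniz_defect_peirce11: "leibniz_defect e (e * y * e) = 0"
proof -
  define w where "w = e * y * e"
  have ew: "e * w = w" and we: "w * e = w"
    unfolding w_def by (simp_all add: mult.assoc idem idempotent_assoc[OF idem])
  have Dew: "D e * w * e = D e * w"
    by (simp add: mult.assoc we)
  have Dw: "D w = D e * w + e * D w * e + w * D e"
    using sandwich[of e w] unfolding ew we Dew .
  have "e * D e * w = 0"
    using idempotent_corner unfolding w_def by (metis mult.assoc mult_zero_left)
  have "e * D w = e * (D e * w + e * D w * e + w * D e)"
    using Dw by (rule arg_cong)
  also have "\<dots> = e * D w * e + w * D e"
    using \<open>e * D e * w = 0\<close> by (simp add: distrib_left mult.assoc[symmetric] idem ew)
  finally have eDw: "e * D w = e * D w * e + w * D e" .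
  have "leibniz_defect e w = D w - D e * w - e * D w"
    unfolding leibniz_defect_def ew ..
  also have "\<dots> = D w - D e * w - (e * D w * e + w * D e)"
    using eDw by (rule arg_cong)
  also have "\<dots> = D w - (D e * w + e * D w * e + w * D e)"
    by (simp add: algebra_simps)
  also have "\<dots> = 0"
    unfolding Dw[symmetric] by simp
  finally show ?thesis
    unfolding w_def .
qed

lemma leibniz_defect_peirce12:
  assumes ea: "e * a = a" and ae: "a * e = 0"
  shows "leibniz_defect e a = (1 - e) * D a * e"
proof -
  have Da: "D a = D e * a + e * D a + D a * e + a * D e"
    using jordan[of e a] unfolding ea ae add_0_right .
  have aDe: "a * D e = a * D e * e"
  proof -
    have "a * D e = a * (D e * e + e * D e)"
      using idempotent_eq by (rule arg_cong)
    then show ?thesis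
      by (simp add: distrib_left ae flip: mult.assoc)
  qed
  have "e * D a * e = e * (D e * a + e * D a + D a * e + a * D e) * e"
    using Da by (rule arg_cong)
  also have "\<dots> = e * D a * e + (e * D a * e + a * D e * e)"
    using ea by (simp add: algebra_simps idem idempotent_assoc[OF idem] ae flip: mult.assoc[of e a])
  finally have corner: "e * D a * e + a * D e = 0"
    unfolding aDe[symmetric] by simp
  have "leibniz_defect e a = D a * e + a * D e"
    unfolding leibniz_defect_def ea by (subst (1) Da) (simp add: algebra_simps)
  also have "\<dots> = (1 - e) * D a * e"
    using corner by (simp add: algebra_simps eq_neg_iff_add_eq_0)
  finally show ?thesis .
qed

end

lemma leibniz_defect_peirce22:
  assumes "e * e = e"
  shows "leibniz_defect e ((1 - e) * y * (1 - e)) = 0"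
proof -
  have "(1 - e) * (1 - e) = 1 - e"
    using assms by (simp add: algebra_simps)
  then show ?thesis
    using leibniz_defect_peirce11[of "1 - e" y] leibniz_defect_complement[of e] by simp
qed

lemma leibniz_defect_peirce21:
  assumes "e * e = e" and "b * e = b" and "e * b = 0"
  shows "leibniz_defect e b = - (e * D b * (1 - e))"
proof -
  have "(1 - e) * (1 - e) = 1 - e" "(1 - e) * b = b" "b * (1 - e) = 0"
    using assms by (simp_all add: algebra_simps)
  then have "leibniz_defect (1 - e) b = e * D b * (1 - e)"
    using leibniz_defect_peirce12[of "1 - e" b] by simp
  then show ?thesis
    using leibniz_defect_complement[of e b] by (metis minus_minus)
qed

lemma regular_corner_zero:
  assumes "p * u = 0" and "u * q = 0" and "u * v * u = u"
  shows "p * D u * q = 0"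
proof -
  have "D u = D u * v * u + u * D v * u + u * v * D u"
    using sandwich[of u v] unfolding assms(3) .
  then have "p * D u * q = p * (D u * v * u + u * D v * u + u * v * D u) * q"
    by (rule arg_cong)
  also have "\<dots> = p * D u * v * (u * q) + (p * u) * D v * u * q + (p * u) * v * D u * q"
    by (simp add: algebra_simps)
  also have "\<dots> = 0"
    using assms(1,2) by simp
  finally show ?thesis .
qed

lemma corner_zero_regular_mult:
  assumes "p * u = 0" and "u * q = 0" and "u * v * u = u"
    and "y * u = 0" and "y * q = 0" and "p * y = y" and "y * p = y"
  shows "p * D (u * y) * q = 0"
proof -
  have "D (u * y) = D u * y + u * D y + D y * u + y * D u"
    using jordan[of u y] unfolding \<open>y * u = 0\<close> add_0_right .
  then have "p * D (u * y) * q = p * D u * (y * q) + (p * u) * D y * q + p * D y * (u * q)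
      + (p * y) * D u * q"
    by (simp add: algebra_simps)
  also have "\<dots> = (y * p) * D u * q"
    using assms(1,2,5-7) by simp
  also have "\<dots> = y * (p * D u * q)"
    by (simp add: mult.assoc)
  also have "\<dots> = 0"
    using regular_corner_zero[OF assms(1-3)] by simp
  finally show ?thesis .
qed

lemma corner_zero_mult_regular:
  assumes "p * v = 0" and "v * q = 0" and "v * u * v = v"
    and "v * y = 0" and "p * y = 0" and "q * y = y"
  shows "p * D (y * v) * q = 0"
proof -
  have "D (y * v) = D y * v + y * D v + D v * y + v * D y"
    using jordan[of y v] unfolding \<open>v * y = 0\<close> add_0_right .
  then have "p * D (y * v) * q = p * D y * (v * q) + (p * y) * D v * q + p * D v * (q * y) * q
      + (p * v) * D y * q"
    using \<open>q * y = y\<close> by (simp add: algebra_simps)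
  also have "\<dots> = (p * D v * q) * y * q"
    using assms(1,2,5) by (simp add: mult.assoc)
  also have "\<dots> = 0"
    using regular_corner_zero[OF assms(1-3)] by simp
  finally show ?thesis .
qed

lemma leibniz_at_idempotent:
  assumes idem: "e * e = e" and eu: "e * u = u" and ue: "u * e = 0" and uw: "u * w = e"
  shows "leibniz_at e"
  unfolding leibniz_at_def
proof
  fix y
  (* u v = e, u v u = u and v u v = v: every a in e R (1 - e) factors as u (v a), and every
     b in (1 - e) R e as (b u) v. *)
  define v where "v = (1 - e) * w * e"
  have "u * (1 - e) = u" and "e * (1 - e) = 0"
    using ue idem by (simp_all add: algebra_simps)
  then have uv: "u * v = e" and ve: "v * e = v" and ev: "e * v = 0"
    unfolding v_def using uw idem by (simp_all add: mult.assoc[symmetric], simp add: mult.assoc)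
  have uvu: "u * v * u = u" and vuv: "v * u * v = v"
    using uv eu ve by (simp_all add: mult.assoc)
  have compl: "(1 - e) * u = 0" "v * (1 - e) = 0" "(1 - e) * v = v"
    using eu ve ev by (simp_all add: algebra_simps)
  define a where "a = e * y * (1 - e)"
  have ea: "e * a = a" and ae: "a * e = 0" and a_compl: "a * (1 - e) = a" and au: "a * u = 0"
    unfolding a_def using idem eu by (simp_all add: algebra_simps idempotent_assoc[OF idem])
  have "(1 - e) * (v * a) = v * a"
    using compl(3) by (simp add: mult.assoc[symmetric])
  then have "(1 - e) * D (u * (v * a)) * e = 0"
    using compl(1) ue uvu au ae a_compl by (intro corner_zero_regular_mult) (simp_all add: mult.assoc)
  then have upper: "leibniz_defect e a = 0"
    using leibniz_defect_peirce12[OF idem ea ae] by (simp add: mult.assoc[symmetric] uv ea)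
  define b where "b = (1 - e) * y * e"
  have be: "b * e = b" and eb: "e * b = 0" and b_compl: "(1 - e) * b = b"
    unfolding b_def using idem by (simp_all add: algebra_simps idempotent_assoc[OF idem])
  have vb: "v * b = 0"
    unfolding b_def using compl(2) by (simp add: mult.assoc[symmetric])
  have "e * D (b * u * v) * (1 - e) = 0"
    using ev compl(2) vuv vb eb b_compl
    by (intro corner_zero_mult_regular) (simp_all add: mult.assoc[symmetric])
  then have lower: "leibniz_defect e b = 0"
    using leibniz_defect_peirce21[OF idem be eb] by (simp add: mult.assoc uv be)
  have "y = e * y * e + a + b + (1 - e) * y * (1 - e)"
    unfolding a_def b_def by (simp add: algebra_simps)
  then have "leibniz_defect e y = leibniz_defect e (e * y * e) + leibniz_defect e a
      + leibniz_defect e b + leibniz_defect e ((1 - e) * y * (1 - e))"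
    by (metis leibniz_defect_add)
  then show "leibniz_defect e y = 0"
    using upper lower leibniz_defect_peirce11[OF idem] leibniz_defect_peirce22[OF idem] by simp
qed

end

section \<open>Quasi-Jordan derivations\<close>

locale quasi_jordan_derivation =
  fixes f h :: "'r::ring_1 \<Rightarrow> 'r"
  assumes additive: "f (x + y) = f x + f y"
    and h_additive: "h (x + y) = h x + h y"
    and quasi_jordan: "(f x * y + y * f x) + (x * f y + f y * x) = h (x * y + y * x)"
begin

lemma h_double: "h x + h x = (f x + f x) + (x * f 1 + f 1 * x)"
  using quasi_jordan[of x 1] h_additive[of x x] by simp

lemma commute_idempotent:
  assumes idem: "e * e = e"
  shows "e * f 1 = f 1 * e"
proof -
  define z where "z = f 1"
  (* t has no off-diagonal Peirce components, while t + t = e z + z e. *)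
  define t where "t = f e * e + e * f e - f e"
  have "(f e * e + e * f e) + (f e * e + e * f e) = h (e + e)"
    using quasi_jordan[of e e] by (simp add: idem add_ac)
  also have "\<dots> = (f e + f e) + (e * z + z * e)"
    unfolding h_additive h_double z_def ..
  finally have "e * z + z * e = t + t"
    unfolding t_def by (simp add: algebra_simps)
  have peirce: "e * t * (1 - e) = 0" "(1 - e) * t * e = 0"
    unfolding t_def by (simp_all add: algebra_simps idem idempotent_assoc[OF idem])
  have "e * z * (1 - e) = e * (e * z + z * e) * (1 - e)"
    by (simp add: algebra_simps idem idempotent_assoc[OF idem])
  also have "\<dots> = 0"
    unfolding \<open>e * z + z * e = t + t\<close> using peirce(1) by (simp add: algebra_simps idem)
  finally have "e * z * (1 - e) = 0" .
  have "(1 - e) * z * e = (1 - e) * (e * z + z * e) * e"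
    by (simp add: algebra_simps idem idempotent_assoc[OF idem])
  also have "\<dots> = 0"
    unfolding \<open>e * z + z * e = t + t\<close> using peirce(2) by (simp add: algebra_simps idem)
  finally have "(1 - e) * z * e = 0" .
  with \<open>e * z * (1 - e) = 0\<close> show ?thesis
    unfolding z_def by (simp add: algebra_simps idem idempotent_assoc[OF idem])
qed

lemma jordan_derivation_minus_central:
  assumes central: "\<And>x. x * f 1 = f 1 * x"
    and two_torsion_free: "\<And>x::'r. x + x = 0 \<Longrightarrow> x = 0"
  shows "jordan_derivation (\<lambda>x. f x - f 1 * x)"
proof
  show "f (x + y) - f 1 * (x + y) = f x - f 1 * x + (f y - f 1 * y)" for x y
    by (simp add: additive algebra_simps)
  show "x + x = 0 \<Longrightarrow> x = 0" for x :: 'r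
    by (rule two_torsion_free)
  fix x y :: 'r
  define z where "z = f 1"
  define w where "w = x * y + y * x"
  have zx: "x * (z * y) = z * (x * y)" and zy: "y * (z * x) = z * (y * x)"
    using central[of x] central[of y] unfolding z_def by (simp_all flip: mult.assoc)
  have "(f w - z * w) + (f w - z * w) = (h w + h w) - (z * w + z * w + z * w + z * w)"
    using h_double[of w] central[of w] unfolding z_def by (simp add: algebra_simps)
  also have "\<dots> = ((f x - z * x) * y + x * (f y - z * y) + (f y - z * y) * x + y * (f x - z * x))
      + ((f x - z * x) * y + x * (f y - z * y) + (f y - z * y) * x + y * (f x - z * x))"
    unfolding w_def quasi_jordan[symmetric] by (simp add: algebra_simps zx zy)
  finally have "f w - z * w = (f x - z * x) * y + x * (f y - z * y) + (f y - z * y) * x + y * (f x - z * x)"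
    using double_cancel[OF two_torsion_free] by blast
  then show "f (x * y + y * x) - f 1 * (x * y + y * x) =
      (f x - f 1 * x) * y + x * (f y - f 1 * y) + (f y - f 1 * y) * x + y * (f x - f 1 * x)"
    unfolding z_def w_def .
qed

end

section \<open>Square matrices as a ring\<close>

lemma matrix_add_rdistrib: "(A + B) ** C = A ** C + B ** (C :: 'a::semiring_1^'p^'n)"
  by (vector matrix_matrix_mult_def sum.distrib[symmetric] field_simps)

(* On the type 'a^'n^'n the operation * is the entrywise product; M_n(A) with the matrix product
   gets a type of its own. *)
typedef ('a, 'n) sq_matrix = "UNIV :: ('a::ring_1^'n::finite^'n) set"
  morphisms to_matrix of_matrix
  by simp

setup_lifting type_definition_sq_matrix

instantiation sq_matrix :: (ring_1, finite) ring_1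
begin

lift_definition zero_sq_matrix :: "('a, 'b) sq_matrix" is "0 :: 'a^'b^'b" .
lift_definition one_sq_matrix :: "('a, 'b) sq_matrix" is "mat 1 :: 'a^'b^'b" .
lift_definition plus_sq_matrix ::
    "('a, 'b) sq_matrix \<Rightarrow> ('a, 'b) sq_matrix \<Rightarrow> ('a, 'b) sq_matrix"
  is "(+) :: 'a^'b^'b \<Rightarrow> _" .
lift_definition minus_sq_matrix ::
    "('a, 'b) sq_matrix \<Rightarrow> ('a, 'b) sq_matrix \<Rightarrow> ('a, 'b) sq_matrix"
  is "(-) :: 'a^'b^'b \<Rightarrow> _" .
lift_definition uminus_sq_matrix :: "('a, 'b) sq_matrix \<Rightarrow> ('a, 'b) sq_matrix"
  is "uminus :: 'a^'b^'b \<Rightarrow> _" .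
lift_definition times_sq_matrix ::
    "('a, 'b) sq_matrix \<Rightarrow> ('a, 'b) sq_matrix \<Rightarrow> ('a, 'b) sq_matrix"
  is "(**) :: 'a^'b^'b \<Rightarrow> _" .

instance
proof
  have "(0 :: 'a^'b^'b) \<noteq> mat 1"
    by (auto simp: vec_eq_iff mat_def)
  then show "(0 :: ('a, 'b) sq_matrix) \<noteq> 1"
    by transfer
qed (transfer; simp add: algebra_simps matrix_mul_assoc matrix_add_ldistrib matrix_add_rdistrib)+

end

lift_definition sq_matrix_unit :: "'a \<Rightarrow> 'n \<Rightarrow> 'n \<Rightarrow> ('a::ring_1, 'n::finite) sq_matrix"
  is "\<lambda>c i j. \<chi> k l. if k = i \<and> l = j then c else 0" .

lemma sq_matrix_unit_mult:
  "sq_matrix_unit c i j * sq_matrix_unit d k l = (if j = k then sq_matrix_unit (c * d) i l else 0)"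
  by transfer
    (auto simp: vec_eq_iff matrix_matrix_mult_def if_distrib[of "\<lambda>t. t * _"] sum.delta cong: if_cong)

lemma to_matrix_sum: "to_matrix (sum f A) = (\<Sum>a\<in>A. to_matrix (f a))"
  by (induction A rule: infinite_finite_induct)
    (simp_all add: zero_sq_matrix.rep_eq plus_sq_matrix.rep_eq)

lemma sq_matrix_unit_expansion: "x = (\<Sum>i\<in>UNIV. \<Sum>j\<in>UNIV. sq_matrix_unit (to_matrix x $ i $ j) i j)"
proof -
  have "(\<Sum>j\<in>UNIV. if k = i \<and> l = j then to_matrix x $ i $ j else 0) =
      (if k = i then to_matrix x $ i $ l else 0)" for i k l
    by (cases "k = i") simp_all
  then show ?thesis
    unfolding to_matrix_inject[symmetric]
    by (simp add: to_matrix_sum vec_eq_iff sum_component sq_matrix_unit.rep_eq)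
qed

lemma sq_matrix_idempotent_induct:
  assumes card: "CARD('n::finite) \<ge> 2"
    and diff: "\<And>x y. P x \<Longrightarrow> P y \<Longrightarrow> P (x - y)"
    and mult: "\<And>x y. P x \<Longrightarrow> P y \<Longrightarrow> P (x * y)"
    and idempotent:
      "\<And>e u w. e * e = e \<Longrightarrow> e * u = u \<Longrightarrow> u * e = 0 \<Longrightarrow> u * w = e \<Longrightarrow> P e"
  shows "P (x :: ('a::ring_1, 'n) sq_matrix)"
proof -
  have zero: "P 0"
    by (rule idempotent[of 0 0 0]) simp_all
  have add: "P (x + y)" if "P x" "P y" for x y
    using diff[OF that(1) diff[OF zero that(2)]] by simp
  have off_diagonal: "P (sq_matrix_unit c i j)" if "i \<noteq> j" for c i j
  proof -
    have "P (sq_matrix_unit 1 i i)"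
      by (rule idempotent[of _ "sq_matrix_unit 1 i j" "sq_matrix_unit 1 j i"])
        (use that in \<open>simp_all add: sq_matrix_unit_mult\<close>)
    moreover have "P (sq_matrix_unit 1 i i + sq_matrix_unit c i j)"
      by (rule idempotent[of _ "sq_matrix_unit 1 i j" "sq_matrix_unit 1 j i + sq_matrix_unit c j j"])
        (use that in \<open>simp_all add: sq_matrix_unit_mult algebra_simps\<close>)
    ultimately show ?thesis
      using diff by fastforce
  qed
  have unit: "P (sq_matrix_unit c i j)" for c i j
  proof (cases "i = j")
    case True
    have "\<not> CARD('n) \<le> Suc 0"
      using card by simp
    then obtain a b :: 'n where "a \<noteq> b"
      using card_le_Suc0_iff_eq[of "UNIV :: 'n set"] by auto
    then obtain k where "k \<noteq> i"
      by metis
    then have "P (sq_matrix_unit c i k * sq_matrix_unit 1 k j)"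
      using mult off_diagonal True by simp
    then show ?thesis
      by (simp add: sq_matrix_unit_mult)
  next
    case False
    then show ?thesis
      by (rule off_diagonal)
  qed
  have sum: "P (sum g A)" if "\<And>a. P (g a)" for g :: "'b \<Rightarrow> ('a, 'n) sq_matrix" and A
    using that by (induction A rule: infinite_finite_induct) (simp_all add: zero add)
  show ?thesis
    by (subst sq_matrix_unit_expansion) (intro sum unit)
qed

lemma sq_matrix_quasi_jordan_decomposition:
  fixes f h :: "('a::ring_1, 'n::finite) sq_matrix \<Rightarrow> ('a, 'n) sq_matrix"
  assumes card: "CARD('n) \<ge> 2"
    and two_torsion_free: "\<And>x::('a, 'n) sq_matrix. x + x = 0 \<Longrightarrow> x = 0"
    and "quasi_jordan_derivation f h"
  shows "x * f 1 = f 1 * x"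
    and "f (x * y) - f 1 * (x * y) = (f x - f 1 * x) * y + x * (f y - f 1 * y)"
proof -
  interpret quasi_jordan_derivation f h
    by fact
  have central: "x * f 1 = f 1 * x" for x
  proof (induction x rule: sq_matrix_idempotent_induct[OF card])
    case (2 x y)
    then show ?case
      by (metis mult.assoc)
  qed (simp_all add: algebra_simps commute_idempotent)
  then show "x * f 1 = f 1 * x" .
  interpret D: jordan_derivation "\<lambda>x. f x - f 1 * x"
    using central two_torsion_free by (rule jordan_derivation_minus_central)
  have "D.leibniz_at x"
    by (induction x rule: sq_matrix_idempotent_induct[OF card])
      (auto intro: D.leibniz_at_diff D.leibniz_at_mult D.leibniz_at_idempotent)
  then show "f (x * y) - f 1 * (x * y) = (f x - f 1 * x) * y + x * (f y - f 1 * y)"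
    by (rule D.leibniz_atD)
qed

lemma matrix_quasi_jordan_decomposition:
  fixes f h :: "'a::ring_1^'n::finite^'n \<Rightarrow> 'a^'n^'n"
  assumes card: "CARD('n) \<ge> 2" and two_torsion_free: "\<And>X::'a^'n^'n. X + X = 0 \<Longrightarrow> X = 0"
    and f_additive: "\<And>X Y. f (X + Y) = f X + f Y" and h_additive: "\<And>X Y. h (X + Y) = h X + h Y"
    and quasi_jordan: "\<And>X Y. jprod (f X) Y + jprod X (f Y) = h (jprod X Y)"
  shows "f (mat 1) ** X = X ** f (mat 1)"
    and "f (X ** Y) - f (mat 1) ** (X ** Y) =
      (f X - f (mat 1) ** X) ** Y + X ** (f Y - f (mat 1) ** Y)"
proof -
  define F where "F x = of_matrix (f (to_matrix x))" for x :: "('a, 'n) sq_matrix"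
  define H where "H x = of_matrix (h (to_matrix x))" for x :: "('a, 'n) sq_matrix"
  have F: "to_matrix (F x) = f (to_matrix x)" and H: "to_matrix (H x) = h (to_matrix x)" for x
    by (simp_all add: F_def H_def of_matrix_inverse)
  note to_matrix_ops = zero_sq_matrix.rep_eq one_sq_matrix.rep_eq plus_sq_matrix.rep_eq
    minus_sq_matrix.rep_eq times_sq_matrix.rep_eq of_matrix_inverse
  have quasi_jordan_FH: "quasi_jordan_derivation F H"
    by unfold_locales
      (simp_all add: to_matrix_inject[symmetric] F H to_matrix_ops f_additive h_additive
        quasi_jordan[unfolded jprod_def])
  have "x + x = 0 \<Longrightarrow> x = 0" for x :: "('a, 'n) sq_matrix"
    using two_torsion_free[of "to_matrix x"] by (simp add: to_matrix_inject[symmetric] to_matrix_ops)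
  note decomposition = sq_matrix_quasi_jordan_decomposition[OF card this quasi_jordan_FH]
  show "f (mat 1) ** X = X ** f (mat 1)"
    using decomposition(1)[of "of_matrix X"] by (simp add: to_matrix_inject[symmetric] F to_matrix_ops)
  show "f (X ** Y) - f (mat 1) ** (X ** Y) =
      (f X - f (mat 1) ** X) ** Y + X ** (f Y - f (mat 1) ** Y)"
    using decomposition(2)[of "of_matrix X" "of_matrix Y"]
    by (simp add: to_matrix_inject[symmetric] F to_matrix_ops)
qed

section \<open>Linear maps on M_n(A)\<close>

lemma module_two_torsion_free:
  fixes s :: "'k::field \<Rightarrow> 'v::ab_group_add \<Rightarrow> 'v" and x :: 'v
  assumes "module s" and "(2::'k) \<noteq> 0" and "x + x = 0"
  shows "x = 0"
proof -
  interpret module s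
    by fact
  have "x = s (inverse 2 * 2) x"
    using assms(2) by simp
  also have "\<dots> = s (inverse 2) (s (1 + 1) x)"
    by simp
  also have "\<dots> = s (inverse 2) (x + x)"
    by (simp only: scale_left_distrib scale_one)
  also have "\<dots> = 0"
    using assms(3) by simp
  finally show ?thesis .
qed

lemma module_mscale:
  assumes "module smul"
  shows "module (mscale smul :: 'k::field \<Rightarrow> 'a::ring_1^'n^'n \<Rightarrow> 'a^'n^'n)"
proof -
  interpret module smul
    by fact
  show ?thesis
    by unfold_locales (simp_all add: mscale_def vec_eq_iff scale_right_distrib scale_left_distrib)
qed

lemma flinear_additive: "flinear smul f \<Longrightarrow> f (X + Y) = f X + f Y"
  unfolding flinear_def by (rule module_hom.add)

lemma flinear_add: "flinear smul f \<Longrightarrow> flinear smul g \<Longrightarrow> flinear smul (\<lambda>X. f X + g X)"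
  unfolding flinear_def module_hom_iff by (auto simp: module.scale_right_distrib)

lemma flinear_diff: "flinear smul f \<Longrightarrow> flinear smul g \<Longrightarrow> flinear smul (\<lambda>X. f X - g X)"
  unfolding flinear_def module_hom_iff by (auto simp: module.scale_right_diff_distrib)

lemma mscale_mult_right:
  assumes "unital_algebra smul"
  shows "A ** mscale smul c B = mscale smul c (A ** (B :: 'a::ring_1^'n^'n))"
proof -
  interpret module smul
    using assms unfolding unital_algebra_def by blast
  have "x * smul c y = smul c (x * y)" for x y
    using assms unfolding unital_algebra_def by metis
  then show ?thesis
    by (simp add: vec_eq_iff mscale_def matrix_matrix_mult_def scale_sum_right)
qed

lemma flinear_left_mult:
  assumes "unital_algebra smul"
  shows "flinear smul (\<lambda>X. Z ** (X :: 'a::ring_1^'n^'n))"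
  using assms module_mscale[of smul]
  unfolding flinear_def module_hom_iff unital_algebra_def
  by (simp add: matrix_add_ldistrib mscale_mult_right[OF assms])

lemma left_mult_in_Cent:
  fixes Z :: "'a::ring_1^'n^'n"
  assumes "unital_algebra smul" and central: "\<And>X. Z ** X = X ** Z"
  shows "(\<lambda>X. Z ** X) \<in> Cent smul"
proof -
  have "Z ** (X ** Y) = X ** (Z ** Y)" for X Y :: "'a^'n^'n"
    by (metis central matrix_mul_assoc)
  then show ?thesis
    unfolding Cent_def using flinear_left_mult[OF assms(1)] by (simp add: matrix_mul_assoc)
qed

lemma QJDer_subset_Cent_plus_Der:
  fixes smul :: "'k::field \<Rightarrow> 'a::ring_1 \<Rightarrow> 'a"
  assumes alg: "unital_algebra smul" and two: "(2::'k) \<noteq> 0" and card: "CARD('n::finite) \<ge> 2"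
  shows "(QJDer smul :: ('a^'n^'n \<Rightarrow> 'a^'n^'n) set) \<subseteq> map_set_sum (Cent smul) (Der smul)"
proof
  fix f :: "'a^'n^'n \<Rightarrow> 'a^'n^'n"
  assume "f \<in> QJDer smul"
  then obtain h where f: "flinear smul f" and h: "flinear smul h"
    and quasi_jordan: "\<And>X Y. jprod (f X) Y + jprod X (f Y) = h (jprod X Y)"
    unfolding QJDer_def by blast
  have "module (mscale smul :: 'k \<Rightarrow> 'a^'n^'n \<Rightarrow> 'a^'n^'n)"
    using alg unfolding unital_algebra_def by (blast intro: module_mscale)
  note decomposition = matrix_quasi_jordan_decomposition[OF card module_two_torsion_free[OF this two]
      flinear_additive[OF f] flinear_additive[OF h] quasi_jordan]
  have "(\<lambda>X. f (mat 1) ** X) \<in> Cent smul"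
    using alg decomposition(1) by (rule left_mult_in_Cent)
  moreover have "(\<lambda>X. f X - f (mat 1) ** X) \<in> Der smul"
    unfolding Der_def using flinear_diff[OF f flinear_left_mult[OF alg]] decomposition(2) by blast
  moreover have "f = (\<lambda>X. f (mat 1) ** X + (f X - f (mat 1) ** X))"
    by simp
  ultimately show "f \<in> map_set_sum (Cent smul) (Der smul)"
    unfolding map_set_sum_def by (intro CollectI exI conjI)
qed

lemma jprod_add_left: "jprod (A + B) C = jprod A C + jprod B C"
  unfolding jprod_def by (simp add: matrix_add_ldistrib matrix_add_rdistrib)

lemma jprod_add_right: "jprod A (B + C) = jprod A B + jprod A C"
  unfolding jprod_def by (simp add: matrix_add_ldistrib matrix_add_rdistrib)

lemma jprod_Cent:
  assumes "c \<in> Cent smul"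
  shows "jprod (c X) Y + jprod X (c Y) = c (jprod X Y) + c (jprod X Y)"
proof -
  have mult: "c (A ** B) = c A ** B" "c (A ** B) = A ** c B" for A B
    using assms unfolding Cent_def by blast+
  have add: "c (A + B) = c A + c B" for A B
    using assms unfolding Cent_def by (blast intro: flinear_additive)
  have swap: "Y ** c X = c Y ** X" "X ** c Y = c X ** Y"
    using mult by metis+
  show ?thesis
    unfolding jprod_def add mult(1) swap by (simp add: add_ac)
qed

lemma jprod_Der:
  assumes "d \<in> Der smul"
  shows "jprod (d X) Y + jprod X (d Y) = d (jprod X Y)"
proof -
  have mult: "d (A ** B) = d A ** B + A ** d B" for A B
    using assms unfolding Der_def by blast
  have add: "d (A + B) = d A + d B" for A B
    using assms unfolding Der_def by (blast intro: flinear_additive)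
  show ?thesis
    unfolding jprod_def add mult by (simp add: add_ac)
qed

lemma Cent_plus_Der_subset_QJDer: "map_set_sum (Cent smul) (Der smul) \<subseteq> QJDer smul"
proof
  fix g
  assume "g \<in> map_set_sum (Cent smul) (Der smul)"
  then obtain c d where g: "g = (\<lambda>X. c X + d X)" and c: "c \<in> Cent smul" and d: "d \<in> Der smul"
    unfolding map_set_sum_def by blast
  have linear: "flinear smul c" "flinear smul d"
    using c d unfolding Cent_def Der_def by blast+
  then have "flinear smul g" and "flinear smul (\<lambda>X. c X + c X + d X)"
    unfolding g by (intro flinear_add linear)+
  moreover have "jprod (g X) Y + jprod X (g Y) = c (jprod X Y) + c (jprod X Y) + d (jprod X Y)"
    for X Y
  proof -
    have "jprod (g X) Y + jprod X (g Y) =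
        (jprod (c X) Y + jprod X (c Y)) + (jprod (d X) Y + jprod X (d Y))"
      unfolding g jprod_add_left jprod_add_right by (simp add: add_ac)
    then show ?thesis
      unfolding jprod_Cent[OF c] jprod_Der[OF d] .
  qed
  ultimately show "g \<in> QJDer smul"
    unfolding QJDer_def by blast
qed

theorem corollary4p3:
  fixes smul :: "'k::field \<Rightarrow> 'a::ring_1 \<Rightarrow> 'a"
  assumes "unital_algebra smul"
    and "(2::'k) \<noteq> 0"
    and "CARD('n::finite) \<ge> 2"
  shows "(QJDer smul :: ('a^'n^'n \<Rightarrow> 'a^'n^'n) set) =
         map_set_sum (Cent smul) (Der smul)"
  using QJDer_subset_Cent_plus_Der[OF assms] Cent_plus_Der_subset_QJDer by (rule equalityI)

end
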